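(* Let $n\ge2$ be an integer, $\alpha=1-\frac1n$, $\gamma_n=\frac12+\frac1n$, and let $\beta\le0$ be real with $Q\equiv\alpha-\beta-1\ge1$. For $y\le-1$ put $$F(t)=yt+Q\log\frac{t}{t+1},\quad G(u)=-u^2+2(-y)^{1/2}u+(2Q+\gamma_n)\log u,$$ $$t_0=\frac{-1+\sqrt{1+\frac{4Q}{-y}}}{2},\quad u_0=\frac{(-y)^{1/2}}{2}\Big(1+\sqrt{1+\tfrac{4Q}{-y}+\tfrac{2\gamma_n}{-y}}\Big)$$ (the unique positive critical points of $F$ and $G$). There is a constant $C_n>0$ depending only on $n$ such that for all such $\beta$ and all $y\le-1$: $$C_n^{-1}Q^{-\frac14-\frac1{2n}}\frac{(-y)^{-1}e^{y+F(t_0)}}{\Gamma(Q+1)}\le\mathcal{T}(\beta,\alpha,y)\le C_nQ^{\frac14}\frac{e^{y+F(t_0)}}{\Gamma(Q+1)},$$ $$C_n^{-1}Q^{-\frac14}\frac{(-y)^{\frac{1-2\alpha}{4}}e^{y+G(u_0)}}{\Gamma(Q+1)}\le\mathcal{M}(\beta,\alpha,y)\le C_n\frac{(-y)^{\frac{1-2\alpha}{4}}e^{y+G(u_0)}}{\Gamma(Q+1)}.$$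
   Context: $(x)_k=\prod_{m=1}^k(x+m-1)$, $(x)_0=1$. $\mathcal{M}(\beta,\alpha,y)=\sum_{k\ge0}\frac{(\beta)_k}{(\alpha)_k}\frac{y^k}{k!}$. For $y<0$, $\mathcal{T}(\beta,\alpha,y)=\frac{e^y}{\Gamma(\alpha-\beta)}\int_0^\infty e^{yt}t^{\alpha-\beta-1}(1+t)^{\beta-1}dt$. *)

theory Defs
  imports "HOL-Analysis.Analysis"
begin

definition kummerM :: "real \<Rightarrow> real \<Rightarrow> real \<Rightarrow> real" where
  "kummerM \<beta> \<alpha> y = (\<Sum>k. pochhammer \<beta> k / pochhammer \<alpha> k * y ^ k / fact k)"

text \<open>Tricomi-type function T(beta, alpha, y) for y < 0, via its integral representation.\<close>
definition tricomiT :: "real \<Rightarrow> real \<Rightarrow> real \<Rightarrow> real" where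
  "tricomiT \<beta> \<alpha> y = exp y / Gamma (\<alpha> - \<beta>) *
     (LBINT t:{0<..}. exp (y * t) * t powr (\<alpha> - \<beta> - 1) * (1 + t) powr (\<beta> - 1))"

definition Ffun :: "real \<Rightarrow> real \<Rightarrow> real \<Rightarrow> real" where
  "Ffun Q y t = y * t + Q * ln (t / (t + 1))"

definition Gfun :: "real \<Rightarrow> real \<Rightarrow> real \<Rightarrow> real \<Rightarrow> real" where
  "Gfun \<gamma> Q y u = - u\<^sup>2 + 2 * sqrt (- y) * u + (2 * Q + \<gamma>) * ln u"

definition t0 :: "real \<Rightarrow> real \<Rightarrow> real" where
  "t0 Q y = (-1 + sqrt (1 + 4 * Q / (- y))) / 2"

definition u0 :: "real \<Rightarrow> real \<Rightarrow> real \<Rightarrow> real" where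
  "u0 \<gamma> Q y = sqrt (- y) / 2 * (1 + sqrt (1 + 4 * Q / (- y) + 2 * \<gamma> / (- y)))"

end

theory Submission
  imports Defs "HOL-Real_Asymp.Real_Asymp"
begin

(* Both functions are Laplace-type integrals controlled by the critical points t0 and u0.

   For T the integrand is exp (F t) * (1 + t) powr (-1 - 1/n).  Since F is maximal at t0, the
   upper bound follows by integrating the second factor, which gives n.  For the lower bound,
   F stays within 2 of F t0 on the window [t0, t0 + sqrt (t0 / (-y))], whose length is at least
   Q^(1/4) / (sqrt 2 * (-y)) and on which the second factor is at least Q^(-1/2 - 1/(2n)) / 9.

   For M, Kummer's transformation M(beta, alpha, y) = e^y M(Q + 1, alpha, -y) together with
   Gamma (Q + 1 + k) = (Q + 1)_k Gamma (Q + 1) turns the series into the integral of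
   x^Q e^(-x) 0F1(alpha; -y x).  Comparing (1/2)_k / (alpha)_k with (2k + 1)^(-r), where
   alpha = 1/2 + r, shows that 0F1(alpha; z) is comparable to z^(-r/2) e^(2 sqrt z), so the
   integrand is comparable to exp (G (sqrt x)) / sqrt x.  The estimate
   G u <= G u0 - (u - u0)^2 bounds the integral by 2 pi times the peak value, and
   G u >= G u0 - 3 on [u0, u0 + 1] bounds it from below. *)

lemma powr_le_weighted_mean:
  fixes a r :: real
  assumes "0 \<le> r" "r \<le> 1" "0 \<le> a"
  shows "a powr r \<le> r * a + (1 - r)"
  using Youngs_inequality_0[of r "1 - r" a 1] assms by (cases "a = 0") auto

lemma powr_ge_one_minus_inverse:
  fixes u r :: real
  assumes "0 \<le> r" "0 < u"
  shows "1 + r * (1 - 1/u) \<le> u powr r"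
proof -
  have "1 - 1/u \<le> ln u"
    using ln_le_minus_one[of "1/u"] assms by (simp add: ln_div)
  then have "1 + r * (1 - 1/u) \<le> 1 + r * ln u"
    using assms by (simp add: mult_left_mono)
  also have "\<dots> \<le> exp (r * ln u)" by (rule exp_ge_add_one_self)
  finally show ?thesis using assms by (simp add: powr_def mult.commute)
qed

lemma ln_one_plus_ge:
  fixes x :: real
  assumes "0 \<le> x"
  shows "x - x^2 \<le> ln (1 + x)"
proof (cases "x \<le> 1")
  case True
  then show ?thesis using assms by (rule ln_one_plus_pos_lower_bound[rotated])
next
  case False
  then have "x - x^2 \<le> 0" by (simp add: power2_eq_square)
  also have "0 \<le> ln (1 + x)" using assms by simp
  finally show ?thesis .
qed

section \<open>The hypergeometric function 0F1\<close>

definition half_pochhammer_ratio :: "real \<Rightarrow> nat \<Rightarrow> real" where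
  "half_pochhammer_ratio a k = pochhammer (1/2) k / pochhammer a k"

lemma half_pochhammer_ratio_pos: "0 < a \<Longrightarrow> 0 < half_pochhammer_ratio a k"
  by (simp add: half_pochhammer_ratio_def pochhammer_pos)

lemma half_pochhammer_ratio_Suc:
  assumes "0 < a"
  shows "half_pochhammer_ratio a (Suc k) = half_pochhammer_ratio a k * (2*k+1) / (2*k+2*a)"
  using assms pochhammer_pos[OF assms, of k]
  by (simp add: half_pochhammer_ratio_def pochhammer_rec' field_simps)

lemma half_pochhammer_ratio_le:
  assumes "0 \<le> r" "r \<le> 1"
  shows "half_pochhammer_ratio (1/2 + r) k * (2 * real k + 1) powr r \<le> 1"
proof (induction k)
  case 0
  then show ?case by (simp add: half_pochhammer_ratio_def)
next
  case (Suc k)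
  define q p d where "q = 2 * real k + 1" and "p = 2 * real k + 3" and "d = 2 * real k + 1 + 2 * r"
  have q: "0 < q" and d: "0 < d" using assms by (simp_all add: q_def d_def)
  have "p powr r = q powr r * (p / q) powr r"
    using q by (simp add: p_def powr_divide)
  also have "\<dots> \<le> q powr r * (r * (p / q) + (1 - r))"
    using assms q by (intro mult_left_mono powr_le_weighted_mean) (auto simp: p_def)
  also have "\<dots> = q powr r * (d / q)"
    using q by (simp add: p_def q_def d_def field_simps)
  finally have growth: "p powr r \<le> q powr r * (d / q)" .
  have "half_pochhammer_ratio (1/2 + r) (Suc k) * p powr r
      = half_pochhammer_ratio (1/2 + r) k * q / d * p powr r"
    using assms by (simp add: half_pochhammer_ratio_Suc q_def d_def)
  also have "\<dots> \<le> half_pochhammer_ratio (1/2 + r) k * q / d * (q powr r * (d / q))"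
    using assms q d half_pochhammer_ratio_pos[of "1/2 + r" k] growth by (intro mult_left_mono) auto
  also have "\<dots> = half_pochhammer_ratio (1/2 + r) k * q powr r"
    using q d by (simp add: field_simps)
  also have "\<dots> \<le> 1"
    using Suc.IH by (simp add: q_def)
  finally show ?case by (simp add: p_def add.commute)
qed

lemma half_pochhammer_ratio_ge:
  assumes "0 \<le> r" "r \<le> 1/2"
  shows "1/2 \<le> half_pochhammer_ratio (1/2 + r) k * (2 * real k + 1) powr r"
proof -
  \<comment> \<open>With \<open>2k + 1\<close> in place of \<open>2k - 1\<close> the tangent-line bound for \<open>powr\<close> is too weak
    to close the induction.\<close>
  have shifted: "1/2 \<le> half_pochhammer_ratio (1/2 + r) k * (2 * real k - 1) powr r" if "1 \<le> k" for k
    using that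
  proof (induction k rule: dec_induct)
    case base
    then show ?case using assms by (simp add: half_pochhammer_ratio_def field_simps)
  next
    case (step k)
    define q p d where "q = 2 * real k - 1" and "p = 2 * real k + 1" and "d = 2 * real k + 1 + 2 * r"
    have q: "0 < q" and p: "0 < p" and d: "0 < d" using step assms by (simp_all add: q_def p_def d_def)
    have "q powr r * (d / p) = q powr r * (1 + r * (1 - 1 / (p / q)))"
      using p q by (simp add: d_def q_def p_def field_simps)
    also have "\<dots> \<le> q powr r * (p / q) powr r"
      using assms p q by (intro mult_left_mono powr_ge_one_minus_inverse) auto
    also have "\<dots> = p powr r"
      using p q by (simp add: powr_divide)
    finally have growth: "q powr r * (d / p) \<le> p powr r" .
    have "1/2 \<le> half_pochhammer_ratio (1/2 + r) k * q powr r"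
      using step.IH by (simp add: q_def)
    also have "\<dots> = half_pochhammer_ratio (1/2 + r) k * p / d * (q powr r * (d / p))"
      using p d by (simp add: field_simps)
    also have "\<dots> \<le> half_pochhammer_ratio (1/2 + r) k * p / d * p powr r"
      using assms p d half_pochhammer_ratio_pos[of "1/2 + r" k] growth by (intro mult_left_mono) auto
    also have "\<dots> = half_pochhammer_ratio (1/2 + r) (Suc k) * p powr r"
      using assms by (simp add: half_pochhammer_ratio_Suc p_def d_def)
    finally show ?case by (simp add: p_def add.commute)
  qed
  show ?thesis
  proof (cases "k = 0")
    case True
    then show ?thesis by (simp add: half_pochhammer_ratio_def)
  next
    case False
    have "half_pochhammer_ratio (1/2 + r) k * (2 * real k - 1) powr r
        \<le> half_pochhammer_ratio (1/2 + r) k * (2 * real k + 1) powr r"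
      using False assms half_pochhammer_ratio_pos[of "1/2 + r" k]
      by (intro mult_left_mono powr_mono2) auto
    then show ?thesis using shifted[of k] False by (simp add: add.commute)
  qed
qed

lemma cosh_sums_even: "(\<lambda>k. x^(2*k) / fact (2*k)) sums cosh (x::real)"
proof -
  have "(\<lambda>k. \<Sum>i\<in>{k*2..<k*2+2}. if even i then x^i /\<^sub>R fact i else 0) sums cosh x"
    by (rule sums_group[OF cosh_converges]) auto
  moreover have "{k*2..<k*2+2} = {2*k, 2*k+1}" for k :: nat by auto
  ultimately show ?thesis by (simp add: divide_inverse mult.commute)
qed

lemma sinh_sums_odd: "(\<lambda>k. x^(2*k+1) / fact (2*k+1)) sums sinh (x::real)"
proof -
  have "(\<lambda>k. \<Sum>i\<in>{k*2..<k*2+2}. if even i then 0 else x^i /\<^sub>R fact i) sums sinh x"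
    by (rule sums_group[OF sinh_converges]) auto
  moreover have "{k*2..<k*2+2} = {2*k, 2*k+1}" for k :: nat by auto
  ultimately show ?thesis by (simp add: divide_inverse mult.commute)
qed

lemma exp_sums_even_odd: "(\<lambda>k. x^(2*k) / fact (2*k) + x^(2*k+1) / fact (2*k+1)) sums exp (x::real)"
  using sums_add[OF cosh_sums_even[of x] sinh_sums_odd[of x]] unfolding cosh_plus_sinh .

lemma sums_odd_weighted_even:
  "(\<lambda>k. (2 * real k + 1) * (x^(2*k) / fact (2*k))) sums (cosh x + x * sinh (x::real))"
proof -
  have shifted: "2 * real (Suc k) * (x^(2 * Suc k) / fact (2 * Suc k)) = x * (x^(2*k+1) / fact (2*k+1))" for k
  proof -
    have "2 * Suc k = Suc (2*k+1)" by simp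
    then have "(fact (2 * Suc k) :: real) = 2 * real (Suc k) * fact (2*k+1)"
      "x^(2 * Suc k) = x * x^(2*k+1)"
      by (simp_all only: fact_Suc power_Suc) simp
    then show ?thesis by simp
  qed
  have "(\<lambda>k. 2 * real (Suc k) * (x^(2 * Suc k) / fact (2 * Suc k))) sums (x * sinh x)"
    using sums_mult[OF sinh_sums_odd[of x], of x] by (simp only: shifted)
  then have "(\<lambda>k. 2 * real k * (x^(2*k) / fact (2*k))) sums (x * sinh x)"
    by (subst (asm) sums_Suc_iff) simp
  from sums_add[OF cosh_sums_even[of x] this] show ?thesis
    by (simp add: algebra_simps add_divide_distrib)
qed

definition hyp0F1 :: "real \<Rightarrow> real \<Rightarrow> real" where
  "hyp0F1 a z = (\<Sum>k. z^k / (pochhammer a k * fact k))"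

lemma summable_hyp0F1:
  fixes a z :: real
  assumes "0 < a"
  shows "summable (\<lambda>k. z^k / (pochhammer a k * fact k))"
proof -
  define m where "m = min a 1"
  have m: "0 < m" "m \<le> 1" using assms by (auto simp: m_def min_def)
  have poch: "m^k \<le> pochhammer a k" for k
  proof -
    have "m^k = (\<Prod>i = 0..<k. m)" by simp
    also have "\<dots> \<le> (\<Prod>i = 0..<k. a + real i)"
      using m by (intro prod_mono) (auto simp: m_def)
    finally show ?thesis by (simp add: pochhammer_prod)
  qed
  have "norm (z^k / (pochhammer a k * fact k)) \<le> (\<bar>z\<bar> / m)^k / fact k" for k
  proof -
    have "norm (z^k / (pochhammer a k * fact k)) = \<bar>z\<bar>^k / (pochhammer a k * fact k)"
      using pochhammer_pos[OF assms, of k] by (simp add: abs_mult power_abs)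
    also have "\<dots> \<le> \<bar>z\<bar>^k / (m^k * fact k)"
      using m poch[of k] pochhammer_pos[OF assms, of k] by (intro divide_left_mono mult_right_mono) auto
    finally show ?thesis by (simp add: power_divide)
  qed
  moreover have "summable (\<lambda>k. (\<bar>z\<bar> / m)^k / fact k)"
    using summable_exp[of "\<bar>z\<bar> / m"] by (simp add: divide_inverse mult.commute)
  ultimately show ?thesis by (blast intro: summable_comparison_test')
qed

lemma hyp0F1_term_eq:
  assumes "0 < a"
  shows "(x^2/4)^k / (pochhammer a k * fact k) = half_pochhammer_ratio a k * (x^(2*k) / fact (2*k))"
proof -
  have "pochhammer (1/2) k > (0::real)" "pochhammer a k > 0"
    using assms by (simp_all add: pochhammer_pos)
  then show ?thesis
    by (simp add: half_pochhammer_ratio_def fact_double power_divide power_mult power_mult_distrib)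
qed

lemma hyp0F1_term_le:
  fixes x r :: real
  assumes "0 < x" "0 \<le> r" "r \<le> 1"
  shows "(x^2/4)^k / (pochhammer (1/2 + r) k * fact k)
    \<le> x powr (-r) * (x^(2*k) / fact (2*k) + x^(2*k+1) / fact (2*k+1))"
proof -
  define q t where "q = 2 * real k + 1" and "t = x^(2*k) / fact (2*k)"
  have q: "0 < q" by (simp add: q_def)
  have t: "0 \<le> t" using assms by (simp add: t_def)
  have "half_pochhammer_ratio (1/2 + r) k * q powr r \<le> 1"
    using half_pochhammer_ratio_le[OF assms(2,3)] by (simp add: q_def)
  then have ratio: "half_pochhammer_ratio (1/2 + r) k \<le> q powr (-r)"
    using q by (simp add: powr_minus field_simps)
  have "(x/q) powr r \<le> r * (x/q) + (1 - r)"
    using assms q by (intro powr_le_weighted_mean) auto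
  also have "\<dots> \<le> 1 + x/q"
    using assms q mult_left_le_one_le[of "x/q" r] by auto
  finally have split: "q powr (-r) \<le> x powr (-r) * (1 + x/q)"
    using assms q by (simp add: powr_divide powr_minus field_simps)
  have odd: "t * (x/q) = x^(2*k+1) / fact (2*k+1)"
    by (simp add: t_def q_def field_simps)
  have "(x^2/4)^k / (pochhammer (1/2 + r) k * fact k) = half_pochhammer_ratio (1/2 + r) k * t"
    using assms by (simp add: hyp0F1_term_eq t_def)
  also have "\<dots> \<le> q powr (-r) * t"
    using ratio t by (rule mult_right_mono)
  also have "\<dots> \<le> x powr (-r) * (1 + x/q) * t"
    using split t by (rule mult_right_mono)
  also have "\<dots> = x powr (-r) * (t + t * (x/q))"
    by (simp add: algebra_simps)
  finally show ?thesis
    by (simp only: odd) (simp add: t_def)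
qed

lemma hyp0F1_term_ge:
  fixes x r :: real
  assumes "0 < x" "0 \<le> r" "r \<le> 1/2"
  shows "1/2 * (1 + x) powr (-r) * ((1 + r) * (x^(2*k) / fact (2*k))
      - r / (1 + x) * ((2 * real k + 1) * (x^(2*k) / fact (2*k))))
    \<le> (x^2/4)^k / (pochhammer (1/2 + r) k * fact k)"
proof -
  define q t y where "q = 2 * real k + 1" and "t = x^(2*k) / fact (2*k)" and "y = 1 + x"
  have q: "0 < q" by (simp add: q_def)
  have y: "0 < y" using assms by (simp add: y_def)
  have t: "0 \<le> t" using assms by (simp add: t_def)
  have "1/2 \<le> half_pochhammer_ratio (1/2 + r) k * q powr r"
    using half_pochhammer_ratio_ge[OF assms(2,3)] by (simp add: q_def)
  then have ratio: "1/2 * q powr (-r) \<le> half_pochhammer_ratio (1/2 + r) k"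
    using q by (simp add: powr_minus field_simps)
  have "(1 + r) - r / y * q = 1 + r * (1 - 1 / (y/q))"
    using q y by (simp add: field_simps)
  also have "\<dots> \<le> (y/q) powr r"
    using assms q y by (intro powr_ge_one_minus_inverse) auto
  finally have tangent: "y powr (-r) * ((1 + r) - r / y * q) \<le> q powr (-r)"
    using q y by (simp add: powr_divide powr_minus field_simps)
  have "1/2 * y powr (-r) * ((1 + r) * t - r / y * (q * t))
      = 1/2 * (y powr (-r) * ((1 + r) - r / y * q)) * t"
    by (simp add: algebra_simps)
  also have "\<dots> \<le> 1/2 * q powr (-r) * t"
    using tangent t by (intro mult_right_mono) auto
  also have "\<dots> \<le> half_pochhammer_ratio (1/2 + r) k * t"
    using ratio t by (rule mult_right_mono)
  also have "\<dots> = (x^2/4)^k / (pochhammer (1/2 + r) k * fact k)"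
    using assms by (simp add: hyp0F1_term_eq t_def)
  finally show ?thesis by (simp add: q_def t_def y_def)
qed

lemma hyp0F1_le:
  fixes z r :: real
  assumes "0 < z" "0 \<le> r" "r \<le> 1"
  shows "hyp0F1 (1/2 + r) z \<le> z powr (-r/2) * exp (2 * sqrt z)"
proof -
  define x where "x = 2 * sqrt z"
  have x: "0 < x" and z: "z = x^2/4"
    using assms by (simp_all add: x_def power_mult_distrib)
  have terms: "z^k / (pochhammer (1/2 + r) k * fact k)
      \<le> x powr (-r) * (x^(2*k) / fact (2*k) + x^(2*k+1) / fact (2*k+1))" for k
    using hyp0F1_term_le[OF x assms(2,3), of k] by (simp only: z)
  have "(\<lambda>k. z^k / (pochhammer (1/2 + r) k * fact k)) sums hyp0F1 (1/2 + r) z"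
    unfolding hyp0F1_def using assms by (intro summable_sums summable_hyp0F1) auto
  moreover have "(\<lambda>k. x powr (-r) * (x^(2*k) / fact (2*k) + x^(2*k+1) / fact (2*k+1)))
      sums (x powr (-r) * exp x)"
    by (intro sums_mult exp_sums_even_odd)
  ultimately have "hyp0F1 (1/2 + r) z \<le> x powr (-r) * exp x"
    by (rule sums_le[OF terms])
  also have "x powr (-r) \<le> sqrt z powr (-r)"
    using assms by (intro powr_mono2') (auto simp: x_def)
  then have "x powr (-r) * exp x \<le> z powr (-r/2) * exp (2 * sqrt z)"
    using assms by (simp add: x_def powr_half_sqrt[symmetric] powr_powr)
  finally show ?thesis .
qed

lemma hyp0F1_ge_exp:
  fixes x r :: real
  assumes "0 < x" "0 \<le> r" "r \<le> 1/2"
  shows "1/4 * (1 + x) powr (-r) * exp x \<le> hyp0F1 (1/2 + r) (x^2/4)"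
proof -
  define C S where "C = cosh x" and "S = sinh x"
  have "(\<lambda>k. 1/2 * (1 + x) powr (-r) * ((1 + r) * (x^(2*k) / fact (2*k))
      - r / (1 + x) * ((2 * real k + 1) * (x^(2*k) / fact (2*k)))))
      sums (1/2 * (1 + x) powr (-r) * ((1 + r) * C - r / (1 + x) * (C + x * S)))"
    unfolding C_def S_def by (intro sums_mult sums_diff cosh_sums_even sums_odd_weighted_even)
  moreover have "(\<lambda>k. (x^2/4)^k / (pochhammer (1/2 + r) k * fact k)) sums hyp0F1 (1/2 + r) (x^2/4)"
    unfolding hyp0F1_def using assms by (intro summable_sums summable_hyp0F1) auto
  ultimately have series: "1/2 * (1 + x) powr (-r) * ((1 + r) * C - r / (1 + x) * (C + x * S))
      \<le> hyp0F1 (1/2 + r) (x^2/4)"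
    by (rule sums_le[OF hyp0F1_term_ge[OF assms]])
  have "r / (1 + x) * (C + x * S) \<le> r / (1 + x) * ((1 + x) * C)"
    using assms sinh_le_cosh_real[of x]
    by (intro mult_left_mono) (auto simp: C_def S_def algebra_simps)
  also have "\<dots> = r * C"
    using assms by simp
  finally have "r / (1 + x) * (C + x * S) \<le> r * C" .
  moreover have "exp x / 2 \<le> C"
    by (simp add: C_def cosh_def)
  moreover have "(1 + r) * C = C + r * C"
    by (simp add: algebra_simps)
  ultimately have "exp x / 2 \<le> (1 + r) * C - r / (1 + x) * (C + x * S)"
    by linarith
  then have "1/4 * (1 + x) powr (-r) * exp x
      \<le> 1/2 * (1 + x) powr (-r) * ((1 + r) * C - r / (1 + x) * (C + x * S))"
    using mult_left_mono[of "exp x / 2" _ "1/2 * (1 + x) powr (-r)"] by simp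
  with series show ?thesis
    by linarith
qed

lemma hyp0F1_ge:
  fixes z r :: real
  assumes "1 \<le> z" "0 \<le> r" "r \<le> 1/2"
  shows "1/12 * (z powr (-r/2) * exp (2 * sqrt z)) \<le> hyp0F1 (1/2 + r) z"
proof -
  define x where "x = 2 * sqrt z"
  have x: "0 < x" and z: "z = x^2/4"
    using assms by (simp_all add: x_def power_mult_distrib)
  have "1/3 * z powr (-r/2) \<le> 3 powr (-r) * z powr (-r/2)"
    using assms powr_mono[of "-1" "-r" 3] by (intro mult_right_mono) (auto simp: powr_minus)
  also have "\<dots> = (3 * sqrt z) powr (-r)"
    using assms by (simp add: powr_mult powr_half_sqrt[symmetric] powr_powr)
  also have "\<dots> \<le> (1 + x) powr (-r)"
  proof (rule powr_mono2')
    have "1 \<le> sqrt z" using assms by simp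
    then show "0 < 1 + x" "1 + x \<le> 3 * sqrt z"
      unfolding x_def by linarith+
  qed (use assms in simp)
  finally have power: "1/3 * z powr (-r/2) \<le> (1 + x) powr (-r)" .
  have "1/12 * (z powr (-r/2) * exp (2 * sqrt z)) = 1/4 * (1/3 * z powr (-r/2)) * exp x"
    by (simp add: x_def)
  also have "\<dots> \<le> 1/4 * (1 + x) powr (-r) * exp x"
    using power by (intro mult_right_mono mult_left_mono) auto
  also have "\<dots> \<le> hyp0F1 (1/2 + r) z"
    using hyp0F1_ge_exp[OF x assms(2,3)] by (simp only: z)
  finally show ?thesis .
qed

section \<open>Integral representations\<close>

lemma pochhammer_minus_of_nat:
  assumes "j \<le> k"
  shows "pochhammer (- real k) j = (-1)^j * fact k / fact (k - j)"
proof -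
  have "(-1)^j * pochhammer (- real k) j / fact j = real k gchoose j"
    by (rule gbinomial_pochhammer[symmetric])
  also have "\<dots> = fact k / (fact j * fact (k - j))"
    using binomial_fact[OF assms, where 'a=real] binomial_gbinomial[of k j, where 'a=real] by metis
  finally have signed: "(-1)^j * pochhammer (- real k) j = fact k / fact (k - j)"
    by (simp add: field_simps)
  have "(-1::real)^j * (-1)^j = 1"
    by (simp flip: power_mult_distrib)
  then have "pochhammer (- real k) j = (-1)^j * ((-1)^j * pochhammer (- real k) j)"
    by (simp only: mult.assoc[symmetric] mult_1)
  with signed show ?thesis by (simp add: mult.assoc)
qed

lemma kummer_cauchy_coeff:
  fixes a b y :: real
  assumes "0 < a"
  shows "(\<Sum>i\<le>k. y^i / fact i * (pochhammer b (k-i) / pochhammer a (k-i) * (-y)^(k-i) / fact (k-i)))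
    = pochhammer (a - b) k / pochhammer a k * y^k / fact k"
proof -
  have "(\<Sum>i\<le>k. y^i / fact i * (pochhammer b (k-i) / pochhammer a (k-i) * (-y)^(k-i) / fact (k-i)))
      = (\<Sum>j=0..k. y^(k-j) / fact (k-j) * (pochhammer b j / pochhammer a j * (-y)^j / fact j))"
    by (subst sum.atLeastAtMost_rev) (simp add: atMost_atLeast0)
  also have "\<dots> = (\<Sum>j=0..k. y^k / fact k *
      (pochhammer b j * pochhammer (- real k) j / (fact j * pochhammer a j)))"
  proof (rule sum.cong[OF refl])
    fix j assume "j \<in> {0..k}"
    then have jk: "j \<le> k" by simp
    have "y^(k-j) * (-y)^j = (-1)^j * y^k"
      using jk by (simp add: power_minus' power_add[symmetric] mult.commute)
    then show "y^(k-j) / fact (k-j) * (pochhammer b j / pochhammer a j * (-y)^j / fact j)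
        = y^k / fact k * (pochhammer b j * pochhammer (- real k) j / (fact j * pochhammer a j))"
      by (simp add: pochhammer_minus_of_nat[OF jk] field_simps)
  qed
  also have "\<dots> = y^k / fact k *
      (\<Sum>j=0..k. pochhammer b j * pochhammer (- real k) j / (fact j * pochhammer a j))"
    by (simp add: sum_distrib_left)
  also have "(\<Sum>j=0..k. pochhammer b j * pochhammer (- real k) j / (fact j * pochhammer a j))
      = pochhammer (a - b) k / pochhammer a k"
    using Vandermonde_pochhammer[of k a b] assms by simp
  finally show ?thesis by (simp add: ac_simps)
qed

lemma kummerM_transformation:
  fixes a b s :: real
  assumes "0 < a" "0 < b" "0 \<le> s"
    and summable: "summable (\<lambda>k. pochhammer b k / pochhammer a k * s^k / fact k)"
  shows "kummerM (a - b) a (-s) = exp (-s) * kummerM b a s"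
proof -
  define A B where "A i = (-s)^i / fact i" and "B j = pochhammer b j / pochhammer a j * s^j / fact j" for i j
  have "summable (\<lambda>k. norm (A k))"
    using summable_exp[of s] assms by (simp add: A_def abs_mult power_abs divide_inverse mult.commute)
  moreover have "norm (B k) = B k" for k
    using assms pochhammer_pos[of b k] pochhammer_pos[of a k] by (simp add: B_def abs_mult power_abs)
  then have "summable (\<lambda>k. norm (B k))"
    using summable by (simp add: B_def)
  ultimately have "(\<lambda>k. \<Sum>i\<le>k. A i * B (k - i)) sums ((\<Sum>k. A k) * (\<Sum>k. B k))"
    by (rule Cauchy_product_sums)
  moreover have "(\<Sum>i\<le>k. A i * B (k - i)) = pochhammer (a - b) k / pochhammer a k * (-s)^k / fact k" for k
    using kummer_cauchy_coeff[OF assms(1), where b=b and y="-s" and k=k] by (simp add: A_def B_def)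
  moreover have "(\<Sum>k. A k) = exp (-s)"
    using exp_converges[of "-s"] by (simp add: A_def sums_iff divide_inverse mult.commute)
  ultimately show ?thesis
    by (simp add: kummerM_def B_def sums_iff)
qed

lemma nn_integral_powr_exp_Gamma_shift:
  fixes Q :: real
  assumes "-1 < Q"
  shows "(\<integral>\<^sup>+x. ennreal (indicator {0..} x * x powr (Q + real k) / exp x) \<partial>lborel)
    = ennreal (pochhammer (Q + 1) k * Gamma (Q + 1))"
proof -
  have "Q + 1 \<notin> \<int>\<^sub>\<le>\<^sub>0"
    using assms by (auto elim!: nonpos_Ints_cases)
  then have "pochhammer (Q + 1) k = Gamma (Q + 1 + real k) / Gamma (Q + 1)"
    by (rule pochhammer_Gamma)
  moreover have "0 < Gamma (Q + 1)"
    using assms by (intro Gamma_real_pos) simp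
  ultimately have "pochhammer (Q + 1) k * Gamma (Q + 1) = Gamma (Q + 1 + real k)"
    by simp
  then show ?thesis
    using Gamma_conv_nn_integral_real[of "Q + 1 + real k"] assms by simp
qed

abbreviation kummer_integrand :: "real \<Rightarrow> real \<Rightarrow> real \<Rightarrow> real \<Rightarrow> real" where
  "kummer_integrand a Q s x \<equiv> indicator {0..} x * x powr Q / exp x * hyp0F1 a (s * x)"

lemma kummer_integrand_sums:
  fixes a s Q x :: real
  assumes "0 < a"
  shows "(\<lambda>k. s^k / (pochhammer a k * fact k) * (indicator {0..} x * x powr (Q + real k) / exp x))
    sums (kummer_integrand a Q s x)"
proof (cases "0 \<le> x")
  case True
  have "x powr Q * (s * x)^k = s^k * x powr (Q + real k)" for k
    using True by (cases "x = 0") (simp_all add: powr_add powr_realpow power_mult_distrib)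
  then have "(\<lambda>k. s^k / (pochhammer a k * fact k) * (indicator {0..} x * x powr (Q + real k) / exp x))
      = (\<lambda>k. x powr Q / exp x * ((s * x)^k / (pochhammer a k * fact k)))"
    using True by (simp add: mult_ac)
  moreover have "kummer_integrand a Q s x = x powr Q / exp x * hyp0F1 a (s * x)"
    using True by simp
  moreover have "(\<lambda>k. (s * x)^k / (pochhammer a k * fact k)) sums hyp0F1 a (s * x)"
    unfolding hyp0F1_def using assms by (intro summable_sums summable_hyp0F1)
  ultimately show ?thesis
    by (simp only:) (rule sums_mult)
qed simp

lemma nn_integral_powr_exp_hyp0F1:
  fixes a s Q :: real
  assumes "0 < a" "0 \<le> s" "-1 < Q"
  shows "(\<integral>\<^sup>+x. ennreal (kummer_integrand a Q s x) \<partial>lborel)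
    = (\<Sum>k. ennreal (Gamma (Q + 1) * (pochhammer (Q + 1) k / pochhammer a k * s^k / fact k)))"
proof -
  define c where "c k = s^k / (pochhammer a k * fact k)" for k
  define g where "g k x = c k * (indicator {0..} x * x powr (Q + real k) / exp x)" for k x
  have c: "0 \<le> c k" for k
    using assms by (simp add: c_def pochhammer_pos less_imp_le)
  have g: "0 \<le> g k x" for k x
    using c by (simp add: g_def indicator_def)
  have series: "(\<lambda>k. g k x) sums (kummer_integrand a Q s x)" for x
    using kummer_integrand_sums[OF assms(1)] by (simp only: g_def c_def)
  have "(\<integral>\<^sup>+x. ennreal (kummer_integrand a Q s x) \<partial>lborel)
      = (\<integral>\<^sup>+x. (\<Sum>k. ennreal (g k x)) \<partial>lborel)"
    using series g by (intro nn_integral_cong) (simp add: suminf_ennreal2 sums_iff)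
  also have "\<dots> = (\<Sum>k. \<integral>\<^sup>+x. ennreal (g k x) \<partial>lborel)"
    by (rule nn_integral_suminf) (simp add: g_def)
  also have "\<dots> = (\<Sum>k. ennreal (c k) * ennreal (pochhammer (Q + 1) k * Gamma (Q + 1)))"
  proof (rule suminf_cong)
    fix k
    have "(\<integral>\<^sup>+x. ennreal (g k x) \<partial>lborel)
        = (\<integral>\<^sup>+x. ennreal (c k) * ennreal (indicator {0..} x * x powr (Q + real k) / exp x) \<partial>lborel)"
      unfolding g_def using c by (intro nn_integral_cong ennreal_mult) (auto simp: indicator_def)
    also have "\<dots> = ennreal (c k) *
        (\<integral>\<^sup>+x. ennreal (indicator {0..} x * x powr (Q + real k) / exp x) \<partial>lborel)"
      by (rule nn_integral_cmult) measurable
    finally show "(\<integral>\<^sup>+x. ennreal (g k x) \<partial>lborel)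
        = ennreal (c k) * ennreal (pochhammer (Q + 1) k * Gamma (Q + 1))"
      by (simp only: nn_integral_powr_exp_Gamma_shift[OF assms(3)])
  qed
  also have "\<dots> = (\<Sum>k. ennreal (Gamma (Q + 1) * (pochhammer (Q + 1) k / pochhammer a k * s^k / fact k)))"
    using c assms Gamma_real_pos[of "Q + 1"] pochhammer_pos[of "Q + 1"]
    by (simp add: c_def ennreal_mult[symmetric] mult_ac less_imp_le)
  finally show ?thesis .
qed

text \<open>The finiteness hypothesis supplies the convergence of the series \<open>kummerM (Q + 1) a s\<close>.\<close>

lemma kummerM_eq_nn_integral:
  fixes a s Q :: real
  assumes "0 < a" "0 \<le> s" "-1 < Q"
    and finite: "(\<integral>\<^sup>+x. ennreal (kummer_integrand a Q s x) \<partial>lborel) < \<infinity>"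
  shows "kummerM (a - (Q + 1)) a (-s) = exp (-s) / Gamma (Q + 1) *
    enn2real (\<integral>\<^sup>+x. ennreal (kummer_integrand a Q s x) \<partial>lborel)"
proof -
  define c where "c k = pochhammer (Q + 1) k / pochhammer a k * s^k / fact k" for k
  have Gamma: "0 < Gamma (Q + 1)"
    using assms by (intro Gamma_real_pos) simp
  have c_nonneg: "0 \<le> c k" for k
    using assms pochhammer_pos[of "Q + 1" k] pochhammer_pos[of a k] by (simp add: c_def)
  then have c: "0 \<le> Gamma (Q + 1) * c k" for k
    using Gamma by simp
  have identity: "(\<integral>\<^sup>+x. ennreal (kummer_integrand a Q s x) \<partial>lborel)
      = (\<Sum>k. ennreal (Gamma (Q + 1) * c k))"
    unfolding c_def by (rule nn_integral_powr_exp_hyp0F1[OF assms(1-3)])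
  then have "summable (\<lambda>k. Gamma (Q + 1) * c k)"
    using finite c by (intro summable_suminf_not_top) auto
  then have summable: "summable c"
    using Gamma by (simp add: summable_cmult_iff)
  have kummer: "kummerM (Q + 1) a s = (\<Sum>k. c k)"
    by (simp add: kummerM_def c_def)
  have "(\<Sum>k. ennreal (Gamma (Q + 1) * c k)) = ennreal (\<Sum>k. Gamma (Q + 1) * c k)"
    using c summable by (intro suminf_ennreal2 summable_mult)
  also have "(\<Sum>k. Gamma (Q + 1) * c k) = Gamma (Q + 1) * kummerM (Q + 1) a s"
    unfolding kummer by (rule suminf_mult[OF summable])
  finally have "enn2real (\<integral>\<^sup>+x. ennreal (kummer_integrand a Q s x) \<partial>lborel)
      = Gamma (Q + 1) * kummerM (Q + 1) a s"
    using identity Gamma suminf_nonneg[OF summable c_nonneg] unfolding kummer by simp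
  moreover have "kummerM (a - (Q + 1)) a (-s) = exp (-s) * kummerM (Q + 1) a s"
    using assms summable unfolding c_def by (intro kummerM_transformation) auto
  ultimately show ?thesis
    using Gamma by simp
qed

lemma tricomiT_eq_nn_integral:
  "tricomiT \<beta> \<alpha> y = exp y / Gamma (\<alpha> - \<beta>) * enn2real
    (\<integral>\<^sup>+t. ennreal (indicator {0<..} t * (exp (y * t) * t powr (\<alpha> - \<beta> - 1) * (1 + t) powr (\<beta> - 1))) \<partial>lborel)"
  unfolding tricomiT_def set_lebesgue_integral_def
  by (subst integral_eq_nn_integral) (auto simp: indicator_def)

abbreviation tricomi_integrand :: "real \<Rightarrow> real \<Rightarrow> real \<Rightarrow> real \<Rightarrow> real" where
  "tricomi_integrand p Q y t \<equiv> indicator {0<..} t * (exp (Ffun Q y t) * (1 + t) powr (-1 - p))"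

lemma tricomiT_eq_Ffun_integral:
  "tricomiT (-Q - p) (1 - p) y = exp y / Gamma (Q + 1) *
    enn2real (\<integral>\<^sup>+t. ennreal (tricomi_integrand p Q y t) \<partial>lborel)"
proof -
  have pointwise: "exp (y * t) * t powr Q * (1 + t) powr (-Q - p - 1) = exp (Ffun Q y t) * (1 + t) powr (-1 - p)"
    if "0 < t" for t
  proof -
    have "exp (Ffun Q y t) = exp (y * t) * (t powr Q / (1 + t) powr Q)"
      using that by (simp add: Ffun_def exp_add powr_def ln_div add.commute mult.commute exp_diff right_diff_distrib)
    moreover have "-Q - p - 1 = (-1 - p) - Q"
      by simp
    then have "(1 + t) powr (-Q - p - 1) = (1 + t) powr (-1 - p) / (1 + t) powr Q"
      by (simp only: powr_diff)
    ultimately show ?thesis by simp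
  qed
  have "tricomiT (-Q - p) (1 - p) y = exp y / Gamma (Q + 1) *
    enn2real (\<integral>\<^sup>+t. ennreal (indicator {0<..} t * (exp (y * t) * t powr Q * (1 + t) powr (-Q - p - 1))) \<partial>lborel)"
    using tricomiT_eq_nn_integral[of "-Q - p" "1 - p" y] by (simp add: add.commute)
  also have "(\<integral>\<^sup>+t. ennreal (indicator {0<..} t * (exp (y * t) * t powr Q * (1 + t) powr (-Q - p - 1))) \<partial>lborel)
      = (\<integral>\<^sup>+t. ennreal (tricomi_integrand p Q y t) \<partial>lborel)"
    using pointwise by (intro nn_integral_cong) (simp add: indicator_def)
  finally show ?thesis .
qed

lemma nn_integral_FTC_greaterThan_0:
  fixes F f :: "real \<Rightarrow> real"
  assumes deriv: "\<And>x. 0 < x \<Longrightarrow> (F has_real_derivative f x) (at x)"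
    and cont: "\<And>x. 0 < x \<Longrightarrow> isCont f x"
    and nonneg: "\<And>x. 0 < x \<Longrightarrow> 0 \<le> f x"
    and lim_0: "(F \<longlongrightarrow> A) (at_right 0)"
    and lim_top: "(F \<longlongrightarrow> B) at_top"
  shows "(\<integral>\<^sup>+x. ennreal (indicator {0<..} x * f x) \<partial>lborel) = ennreal (B - A)"
proof -
  have "\<And>x. 0 < ereal x \<Longrightarrow> ereal x < \<infinity> \<Longrightarrow> (F has_real_derivative f x) (at x)"
    "\<And>x. 0 < ereal x \<Longrightarrow> ereal x < \<infinity> \<Longrightarrow> isCont f x"
    "AE x in lborel. 0 < ereal x \<longrightarrow> ereal x < \<infinity> \<longrightarrow> 0 \<le> f x"
    "((F \<circ> real_of_ereal) \<longlongrightarrow> A) (at_right 0)" "((F \<circ> real_of_ereal) \<longlongrightarrow> B) (at_left \<infinity>)"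
    using assms unfolding zero_ereal_def ereal_tendsto_simps by auto
  note FTC = interval_integral_FTC_nonneg[of 0 \<infinity>, OF _ this]
  have "set_integrable lborel {0<..} f" "(LBINT x:{0<..}. f x) = B - A"
    using FTC by (simp_all add: zero_ereal_def interval_lebesgue_integral_0_infty[symmetric])
  then show ?thesis
    using nonneg unfolding set_integrable_def set_lebesgue_integral_def
    by (subst nn_integral_eq_integral) (auto simp: indicator_def)
qed

lemma nn_integral_arctan_kernel:
  "(\<integral>\<^sup>+x. ennreal (indicator {0<..} x * (1 / (sqrt x * (1 + (sqrt x - U)^2)))) \<partial>lborel)
    = ennreal (pi + 2 * arctan U)"
proof -
  have "(\<integral>\<^sup>+x. ennreal (indicator {0<..} x * (1 / (sqrt x * (1 + (sqrt x - U)^2)))) \<partial>lborel)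
      = ennreal (2 * (pi/2) - 2 * arctan (0 - U))"
  proof (rule nn_integral_FTC_greaterThan_0)
    fix x :: real assume x: "0 < x"
    define d where "d = 1 + (sqrt x - U)^2"
    have pos: "0 < d" by (simp add: d_def add_pos_nonneg)
    have "((\<lambda>x. 2 * arctan (sqrt x - U)) has_real_derivative
        2 * (inverse (1 + (sqrt x - U)^2) * (inverse (sqrt x) / 2))) (at x)"
      using x by (auto intro!: derivative_eq_intros simp: power2_eq_square)
    moreover have "2 * (inverse (1 + (sqrt x - U)^2) * (inverse (sqrt x) / 2))
        = 1 / (sqrt x * (1 + (sqrt x - U)^2))"
      using x pos unfolding d_def[symmetric] by (simp add: field_simps)
    ultimately show "((\<lambda>x. 2 * arctan (sqrt x - U))
        has_real_derivative 1 / (sqrt x * (1 + (sqrt x - U)^2))) (at x)"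
      by simp
    show "isCont (\<lambda>x. 1 / (sqrt x * (1 + (sqrt x - U)^2))) x"
      using x pos by (auto intro!: continuous_intros simp: d_def)
    show "0 \<le> 1 / (sqrt x * (1 + (sqrt x - U)^2))"
      using x pos by (simp add: d_def)
  next
    show "((\<lambda>x. 2 * arctan (sqrt x - U)) \<longlongrightarrow> 2 * arctan (0 - U)) (at_right 0)"
      by (intro tendsto_intros tendsto_eq_intros) (auto intro: tendsto_ident_at)
    have "filterlim (\<lambda>x. sqrt x - U) at_top at_top"
      by (rule filterlim_tendsto_add_at_top[OF tendsto_const sqrt_at_top, of "-U", simplified])
    then show "((\<lambda>x. 2 * arctan (sqrt x - U)) \<longlongrightarrow> 2 * (pi/2)) at_top"
      by (intro tendsto_mult tendsto_const filterlim_compose[OF tendsto_arctan_at_top])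
  qed
  then show ?thesis by (simp add: arctan_minus)
qed

lemma nn_integral_powr_tail:
  fixes p :: real
  assumes "0 < p"
  shows "(\<integral>\<^sup>+t. ennreal (indicator {0<..} t * (1 + t) powr (-1 - p)) \<partial>lborel) = ennreal (1 / p)"
proof -
  have "(\<integral>\<^sup>+t. ennreal (indicator {0<..} t * (1 + t) powr (-1 - p)) \<partial>lborel)
      = ennreal (0 - (- ((1 + 0) powr (-p)) / p))"
  proof (rule nn_integral_FTC_greaterThan_0)
    fix t :: real assume t: "0 < t"
    have "((\<lambda>t. - ((1 + t) powr (-p)) / p)
        has_real_derivative - ((-p) * (1 + t) powr (-p - 1) * 1) / p) (at t)"
      using t by (auto intro!: derivative_eq_intros)
    moreover have "-p - 1 = -1 - p" by simp
    ultimately show "((\<lambda>t. - ((1 + t) powr (-p)) / p) has_real_derivative (1 + t) powr (-1 - p)) (at t)"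
      using assms by simp
    show "isCont (\<lambda>t. (1 + t) powr (-1 - p)) t"
      using t by (auto intro!: continuous_intros)
  next
    show "((\<lambda>t. - ((1 + t) powr (-p)) / p) \<longlongrightarrow> - ((1 + 0) powr (-p)) / p) (at_right 0)"
      using assms by (intro tendsto_intros tendsto_ident_at) auto
    show "((\<lambda>t. - ((1 + t) powr (-p)) / p) \<longlongrightarrow> 0) at_top"
      using assms by real_asymp
  qed simp
  then show ?thesis by simp
qed

lemma nn_integral_ge_interval:
  fixes f :: "real \<Rightarrow> real"
  assumes "a \<le> b" "0 \<le> L" "\<And>x. x \<in> {a..b} \<Longrightarrow> L \<le> f x"
  shows "ennreal (L * (b - a)) \<le> (\<integral>\<^sup>+x. ennreal (f x) \<partial>lborel)"
proof -
  have "ennreal (L * (b - a)) = (\<integral>\<^sup>+x. ennreal L * indicator {a..b} x \<partial>lborel)"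
    using assms by (simp add: nn_integral_cmult_indicator ennreal_mult)
  also have "\<dots> \<le> (\<integral>\<^sup>+x. ennreal (f x) \<partial>lborel)"
    using assms by (intro nn_integral_mono) (auto simp: indicator_def intro: ennreal_leI)
  finally show ?thesis .
qed

lemma enn2real_geI:
  assumes "ennreal a \<le> x" "x \<le> ennreal b" "0 \<le> a"
  shows "a \<le> enn2real x"
proof -
  have "x < top"
    using assms(2) by (rule le_less_trans) simp
  then show ?thesis
    using enn2real_mono[OF assms(1)] assms(3) by simp
qed

section \<open>The critical points\<close>

lemma t0_critical:
  fixes s Q :: real
  assumes "0 < s" "0 < Q"
  shows "0 < t0 Q (-s)" "Q = s * t0 Q (-s) * (t0 Q (-s) + 1)"
proof -
  define R where "R = sqrt (1 + 4 * Q / s)"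
  have R: "1 < R" "R^2 = 1 + 4 * Q / s"
    using assms by (simp_all add: R_def)
  have T: "t0 Q (-s) = (R - 1) / 2"
    by (simp add: t0_def R_def)
  show "0 < t0 Q (-s)"
    using R by (simp add: T)
  have "s * ((R - 1) / 2) * ((R - 1) / 2 + 1) = s * (R^2 - 1) / 4"
    by (simp add: power2_eq_square field_simps)
  then show "Q = s * t0 Q (-s) * (t0 Q (-s) + 1)"
    using assms by (simp add: T R)
qed

lemma t0_bounds:
  fixes s Q :: real
  assumes "1 \<le> s" "1 \<le> Q"
  shows "t0 Q (-s) \<le> sqrt Q" "sqrt Q / (2 * s) \<le> t0 Q (-s)"
proof -
  define T where "T = t0 Q (-s)"
  have T: "0 < T" "Q = s * T * (T + 1)"
    using t0_critical[of s Q] assms by (simp_all add: T_def)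
  have "T * T \<le> 1 * (T * (T + 1))"
    using T by (simp add: algebra_simps)
  also have "\<dots> \<le> s * (T * (T + 1))"
    using assms T by (intro mult_right_mono) auto
  finally have "T^2 \<le> Q"
    using T by (simp add: power2_eq_square mult.assoc)
  then have upper: "T \<le> sqrt Q"
    by (rule real_le_rsqrt)
  then show "t0 Q (-s) \<le> sqrt Q"
    by (simp only: T_def)
  have "1 \<le> sqrt Q" using assms by simp
  then have "T + 1 \<le> 2 * sqrt Q"
    using upper by linarith
  then have "s * (T + 1) \<le> s * (2 * sqrt Q)"
    using assms by (intro mult_left_mono) auto
  then have "Q / (s * (2 * sqrt Q)) \<le> Q / (s * (T + 1))"
    using assms T by (intro divide_left_mono) auto
  also have "Q / (s * (T + 1)) = T"
    using T assms by (simp add: divide_simps)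
  finally have "Q / (s * (2 * sqrt Q)) \<le> T" .
  moreover have "Q / (s * (2 * sqrt Q)) = sqrt Q / (2 * s)"
  proof -
    have "Q = sqrt Q * sqrt Q"
      using assms by simp
    also have "\<dots> / (s * (2 * sqrt Q)) = sqrt Q / (2 * s)"
      using assms by (simp add: field_simps)
    finally show ?thesis .
  qed
  ultimately show "sqrt Q / (2 * s) \<le> t0 Q (-s)"
    by (simp add: T_def)
qed

lemma t0_window_length:
  fixes s Q :: real
  assumes "1 \<le> s" "1 \<le> Q"
  shows "Q powr (1/4) / (sqrt 2 * s) \<le> sqrt (t0 Q (-s) / s)"
proof -
  have square: "sqrt Q / (2 * s) / s = sqrt Q / (2 * s^2)"
    by (simp add: power2_eq_square)
  have "Q powr (1/4) / (sqrt 2 * s) = sqrt (sqrt Q) / (sqrt 2 * s)"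
    using assms by (simp add: powr_half_sqrt[symmetric] powr_powr)
  also have "\<dots> = sqrt (sqrt Q / (2 * s) / s)"
    unfolding square using assms by (simp add: real_sqrt_divide real_sqrt_mult)
  also have "\<dots> \<le> sqrt (t0 Q (-s) / s)"
    using t0_bounds(2)[OF assms] assms by (intro real_sqrt_le_mono divide_right_mono) auto
  finally show ?thesis .
qed

lemma t0_window_weight:
  fixes s Q p :: real
  assumes "1 \<le> s" "1 \<le> Q" "0 < p" "p \<le> 1"
  defines "T \<equiv> t0 Q (-s)"
  defines "h \<equiv> sqrt (T / s)"
  shows "Q powr (-1/2 - p/2) / 9 \<le> (1 + T + h) powr (-1 - p)"
proof -
  have T: "0 < T" "T \<le> sqrt Q"
    using t0_critical(1)[of s Q] t0_bounds(1)[OF assms(1,2)] assms(1,2) by (simp_all add: T_def)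
  have "sqrt Q * 1 \<le> sqrt Q * sqrt Q"
    using assms by (intro mult_left_mono) auto
  then have root: "sqrt Q \<le> Q"
    using assms by simp
  have "h^2 = T / s"
    using T assms by (simp add: h_def)
  also have "\<dots> \<le> T / 1"
    using T assms by (intro divide_left_mono) auto
  finally have "h^2 \<le> Q"
    using T root by simp
  then have "h \<le> sqrt Q"
    by (rule real_le_rsqrt)
  moreover have "1 \<le> sqrt Q"
    using assms by simp
  moreover have h: "0 \<le> h"
    using T assms(1) by (simp add: h_def)
  ultimately have window: "1 + T + h \<le> 3 * sqrt Q"
    using T by linarith
  have "Q powr (-1/2 - p/2) / 9 \<le> 3 powr (-1 - p) * Q powr (-1/2 - p/2)"
    using assms powr_mono[of "-2" "-1 - p" 3] by (auto simp: powr_minus)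
  also have "\<dots> = (3 * sqrt Q) powr (-1 - p)"
    using assms by (simp add: powr_mult powr_half_sqrt[symmetric] powr_powr field_simps)
  also have "\<dots> \<le> (1 + T + h) powr (-1 - p)"
    using window T assms(3) h by (intro powr_mono2') auto
  finally show ?thesis .
qed

lemma Ffun_diff_critical:
  fixes s T t Q :: real
  assumes "0 < s" "0 < T" "0 < t" "Q = s * T * (T + 1)"
  defines "k \<equiv> (t - T) / ((t + 1) * T)"
  shows "Ffun Q (-s) t - Ffun Q (-s) T = Q * (ln (1 + k) - k) - s * (t - T)^2 / (t + 1)"
    and "-1 < k"
proof -
  have "(t / (t + 1)) / (T / (T + 1)) = 1 + k"
    using assms unfolding k_def by (simp add: divide_simps) (simp add: algebra_simps)
  moreover have "ln ((t / (t + 1)) / (T / (T + 1))) = ln (t / (t + 1)) - ln (T / (T + 1))"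
    using assms by (intro ln_divide_pos) auto
  ultimately have "ln (t / (t + 1)) - ln (T / (T + 1)) = ln (1 + k)"
    by simp
  moreover have "Q * k = s * (t - T) - s * (t - T)^2 / (t + 1)"
    using assms unfolding k_def by (simp add: divide_simps power2_eq_square) (simp add: algebra_simps)
  ultimately show "Ffun Q (-s) t - Ffun Q (-s) T = Q * (ln (1 + k) - k) - s * (t - T)^2 / (t + 1)"
    by (simp add: Ffun_def algebra_simps)
  have "0 < T * t" "0 < (t + 1) * T"
    using assms by simp_all
  moreover have "(t + 1) * T = T * t + T"
    by (simp add: algebra_simps)
  ultimately have "- ((t + 1) * T) < t - T" "0 < (t + 1) * T"
    using assms by linarith+
  then show "-1 < k"
    unfolding k_def by (simp add: less_divide_eq)
qed

lemma Ffun_le_critical: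
  fixes s T t Q :: real
  assumes "0 < s" "0 < T" "0 < t" "Q = s * T * (T + 1)"
  shows "Ffun Q (-s) t \<le> Ffun Q (-s) T"
proof -
  define k where "k = (t - T) / ((t + 1) * T)"
  note diff = Ffun_diff_critical[OF assms, folded k_def]
  have "Q * (ln (1 + k) - k) \<le> 0"
    using assms ln_add_one_self_le_self2[OF diff(2)] by (simp add: mult_nonneg_nonpos)
  moreover have "0 \<le> s * (t - T)^2 / (t + 1)"
    using assms by simp
  ultimately show ?thesis
    using diff(1) by linarith
qed

lemma Ffun_ge_critical:
  fixes s T t Q :: real
  assumes "0 < s" "0 < T" "T \<le> t" "Q = s * T * (T + 1)" "s * (t - T)^2 \<le> T"
  shows "Ffun Q (-s) T - 2 \<le> Ffun Q (-s) t"
proof -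
  define k where "k = (t - T) / ((t + 1) * T)"
  have t: "0 < t" using assms by simp
  have "(t + 1)^2 - (T + 1) = t^2 + (t - T) + t"
    by (simp add: power2_eq_square algebra_simps)
  then have square: "T + 1 \<le> (t + 1)^2"
    using assms t by (smt (verit) zero_le_power2)
  note diff = Ffun_diff_critical[OF assms(1,2) t assms(4), folded k_def]
  have k: "0 \<le> k" using assms by (simp add: k_def)
  have near: "s * (t - T)^2 / T \<le> 1"
    using assms by simp
  have "Q * k^2 = s * (t - T)^2 / T * ((T + 1) / (t + 1)^2)"
    using assms t unfolding k_def by (simp add: divide_simps power2_eq_square)
  also have "\<dots> \<le> s * (t - T)^2 / T * 1"
    using assms square by (intro mult_left_mono) auto
  finally have "Q * k^2 \<le> 1"
    using near by linarith
  moreover have "Q * (k - k^2) \<le> Q * ln (1 + k)"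
    using assms ln_one_plus_ge[OF k] by (intro mult_left_mono) auto
  moreover have "s * (t - T)^2 / (t + 1) \<le> s * (t - T)^2 / T"
    using assms by (intro divide_left_mono) auto
  ultimately show ?thesis
    using diff(1) near by (simp add: algebra_simps)
qed

lemma u0_critical:
  fixes s Q \<gamma> :: real
  assumes "0 < s" "0 \<le> 2 * Q + \<gamma>"
  shows "sqrt s \<le> u0 \<gamma> Q (-s)" "2 * (u0 \<gamma> Q (-s))^2 - 2 * sqrt s * u0 \<gamma> Q (-s) = 2 * Q + \<gamma>"
proof -
  define R where "R = sqrt (1 + 4 * Q / s + 2 * \<gamma> / s)"
  have "0 \<le> (4 * Q + 2 * \<gamma>) / s"
    using assms by simp
  then have nonneg: "0 \<le> 4 * Q / s + 2 * \<gamma> / s"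
    by (simp add: add_divide_distrib)
  then have R: "1 \<le> R" "R^2 = 1 + 4 * Q / s + 2 * \<gamma> / s"
    by (simp_all add: R_def)
  have U: "u0 \<gamma> Q (-s) = sqrt s / 2 * (1 + R)"
    by (simp add: u0_def R_def)
  have "sqrt s * 2 \<le> sqrt s * (1 + R)"
    using R assms by (intro mult_left_mono) auto
  then show "sqrt s \<le> u0 \<gamma> Q (-s)"
    by (simp add: U)
  have "2 * (x / 2 * (1 + R))^2 - 2 * x * (x / 2 * (1 + R)) = x^2 * (R^2 - 1) / 2" for x
    by (simp add: power2_eq_square field_simps)
  then have "2 * (sqrt s / 2 * (1 + R))^2 - 2 * sqrt s * (sqrt s / 2 * (1 + R)) = (sqrt s)^2 * (R^2 - 1) / 2" .
  also have "\<dots> = 2 * Q + \<gamma>"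
    using assms unfolding R(2) real_sqrt_pow2[OF less_imp_le[OF assms(1)]] by (simp add: field_simps)
  finally show "2 * (u0 \<gamma> Q (-s))^2 - 2 * sqrt s * u0 \<gamma> Q (-s) = 2 * Q + \<gamma>"
    by (simp add: U)
qed

lemma Gfun_diff_critical:
  fixes s U u Q \<gamma> :: real
  assumes "0 < U" "0 < u" "2 * U^2 - 2 * sqrt s * U = 2 * Q + \<gamma>"
  shows "Gfun \<gamma> Q (-s) u - Gfun \<gamma> Q (-s) U
    = (2 * Q + \<gamma>) * (ln (1 + (u - U) / U) - (u - U) / U) - (u - U)^2"
proof -
  have "1 + (u - U) / U = u / U"
    using assms by (simp add: field_simps)
  then have "ln u - ln U = ln (1 + (u - U) / U)"
    using assms by (simp add: ln_div)
  moreover have "(2 * Q + \<gamma>) * ((u - U) / U) = (2 * U - 2 * sqrt s) * (u - U)"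
    using assms by (simp flip: assms(3)) (simp add: field_simps power2_eq_square)
  ultimately show ?thesis
    by (simp add: Gfun_def algebra_simps power2_eq_square)
qed

lemma Gfun_le_critical:
  fixes s U u Q \<gamma> :: real
  assumes "0 < U" "0 < u" "2 * U^2 - 2 * sqrt s * U = 2 * Q + \<gamma>" "0 \<le> 2 * Q + \<gamma>"
  shows "Gfun \<gamma> Q (-s) u \<le> Gfun \<gamma> Q (-s) U - (u - U)^2"
proof -
  have "-1 < (u - U) / U"
    using assms by (simp add: field_simps)
  then have "(2 * Q + \<gamma>) * (ln (1 + (u - U) / U) - (u - U) / U) \<le> 0"
    using assms ln_add_one_self_le_self2 by (simp add: mult_nonneg_nonpos)
  then show ?thesis
    using Gfun_diff_critical[OF assms(1-3)] by linarith
qed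

lemma Gfun_ge_critical:
  fixes s U u Q \<gamma> :: real
  assumes "0 \<le> s" "0 < U" "U \<le> u" "u \<le> U + 1" "2 * U^2 - 2 * sqrt s * U = 2 * Q + \<gamma>"
    "0 \<le> 2 * Q + \<gamma>"
  shows "Gfun \<gamma> Q (-s) U - 3 \<le> Gfun \<gamma> Q (-s) u"
proof -
  define h where "h = (u - U) / U"
  have h: "0 \<le> h" using assms by (simp add: h_def)
  have "(2 * Q + \<gamma>) * h^2 = (2 - 2 * sqrt s / U) * (u - U)^2"
    using assms by (simp flip: assms(5)) (simp add: h_def field_simps power2_eq_square)
  also have "\<dots> \<le> 2 * (u - U)^2"
    using assms by (intro mult_right_mono) auto
  finally have "- (2 * (u - U)^2) \<le> (2 * Q + \<gamma>) * (ln (1 + h) - h)"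
    using assms ln_one_plus_ge[OF h] mult_left_mono[of "h - h^2" "ln (1 + h)" "2 * Q + \<gamma>"]
    by (simp add: algebra_simps)
  moreover have "(u - U)^2 \<le> 1"
    using assms by (simp add: power_le_one abs_le_iff)
  ultimately show ?thesis
    using Gfun_diff_critical[of U u s Q \<gamma>] assms by (simp add: h_def)
qed

section \<open>Bounds for the Tricomi function\<close>

lemma nn_integral_Ffun_le:
  fixes p Q y :: real
  assumes "0 < p" "0 < Q" "y < 0"
  shows "(\<integral>\<^sup>+t. ennreal (tricomi_integrand p Q y t) \<partial>lborel)
    \<le> ennreal (exp (Ffun Q y (t0 Q y)) / p)"
proof -
  define T where "T = t0 Q y"
  have T: "0 < T" "Q = (-y) * T * (T + 1)"
    using t0_critical[of "-y" Q] assms by (simp_all add: T_def)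
  have "(\<integral>\<^sup>+t. ennreal (tricomi_integrand p Q y t) \<partial>lborel)
      \<le> (\<integral>\<^sup>+t. ennreal (exp (Ffun Q y T)) * ennreal (indicator {0<..} t * (1 + t) powr (-1 - p)) \<partial>lborel)"
  proof (intro nn_integral_mono)
    fix t :: real
    have "tricomi_integrand p Q y t
        \<le> exp (Ffun Q y T) * (indicator {0<..} t * (1 + t) powr (-1 - p))"
      using Ffun_le_critical[of "-y" T t Q] T assms by (auto simp: indicator_def)
    then have "ennreal (tricomi_integrand p Q y t)
        \<le> ennreal (exp (Ffun Q y T) * (indicator {0<..} t * (1 + t) powr (-1 - p)))"
      by (rule ennreal_leI)
    also have "\<dots> = ennreal (exp (Ffun Q y T)) * ennreal (indicator {0<..} t * (1 + t) powr (-1 - p))"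
      by (rule ennreal_mult) auto
    finally show "ennreal (tricomi_integrand p Q y t)
        \<le> ennreal (exp (Ffun Q y T)) * ennreal (indicator {0<..} t * (1 + t) powr (-1 - p))" .
  qed
  also have "\<dots> = ennreal (exp (Ffun Q y T)) * ennreal (1 / p)"
    using assms by (simp add: nn_integral_cmult nn_integral_powr_tail)
  also have "\<dots> = ennreal (exp (Ffun Q y T) / p)"
    using assms by (simp flip: ennreal_mult)
  finally show ?thesis
    by (simp only: T_def)
qed

lemma tricomiT_le:
  fixes p Q y :: real
  assumes "0 < p" "0 < Q" "y < 0"
  shows "tricomiT (-Q - p) (1 - p) y \<le> exp (y + Ffun Q y (t0 Q y)) / Gamma (Q + 1) / p"
proof -
  have "enn2real (\<integral>\<^sup>+t. ennreal (tricomi_integrand p Q y t) \<partial>lborel)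
      \<le> exp (Ffun Q y (t0 Q y)) / p"
    using nn_integral_Ffun_le[OF assms] assms by (intro enn2real_leI) auto
  moreover have "0 < Gamma (Q + 1)"
    using assms by (intro Gamma_real_pos) simp
  ultimately have "tricomiT (-Q - p) (1 - p) y \<le> exp y / Gamma (Q + 1) * (exp (Ffun Q y (t0 Q y)) / p)"
    unfolding tricomiT_eq_Ffun_integral by (intro mult_left_mono) auto
  then show ?thesis
    by (simp add: exp_add)
qed

lemma nn_integral_Ffun_ge:
  fixes p Q y :: real
  assumes "0 < p" "0 < Q" "y < 0"
  defines "T \<equiv> t0 Q y"
  defines "h \<equiv> sqrt (T / (-y))"
  shows "ennreal (exp (Ffun Q y T - 2) * (1 + T + h) powr (-1 - p) * h)
    \<le> (\<integral>\<^sup>+t. ennreal (tricomi_integrand p Q y t) \<partial>lborel)"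
proof -
  define L where "L = exp (Ffun Q y T - 2) * (1 + T + h) powr (-1 - p)"
  have T: "0 < T" "Q = (-y) * T * (T + 1)"
    using t0_critical[of "-y" Q] assms(2,3) by (simp_all add: T_def)
  have q: "0 \<le> T / (-y)"
    using T(1) assms(3) by (intro divide_nonneg_pos) auto
  then have "h^2 = T / (-y)"
    unfolding h_def by (rule real_sqrt_pow2)
  then have h: "0 \<le> h" "(-y) * h^2 = T"
    using q assms(3) by (simp_all add: h_def)
  have "ennreal (L * ((T + h) - T))
    \<le> (\<integral>\<^sup>+t. ennreal (tricomi_integrand p Q y t) \<partial>lborel)"
  proof (rule nn_integral_ge_interval)
    fix t assume t: "t \<in> {T..T + h}"
    have "(-y) * (t - T)^2 \<le> (-y) * h^2"
      using t h assms(3) by (intro mult_left_mono power_mono) auto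
    then have "(-y) * (t - T)^2 \<le> T"
      using h(2) by (simp only:)
    then have "Ffun Q (-(-y)) T - 2 \<le> Ffun Q (-(-y)) t"
      using t T assms(3) by (intro Ffun_ge_critical) auto
    then have "Ffun Q y T - 2 \<le> Ffun Q y t"
      by simp
    moreover have "(1 + T + h) powr (-1 - p) \<le> (1 + t) powr (-1 - p)"
      using t T assms(1) by (intro powr_mono2') auto
    ultimately have "L \<le> exp (Ffun Q y t) * (1 + t) powr (-1 - p)"
      unfolding L_def by (intro mult_mono) auto
    then show "L \<le> tricomi_integrand p Q y t"
      using t T(1) by simp
  next
    show "T \<le> T + h" "0 \<le> L"
      using h(1) by (simp_all add: L_def)
  qed
  then show ?thesis
    by (simp add: L_def)
qed

lemma tricomiT_ge:
  fixes p Q y :: real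
  assumes "0 < p" "p \<le> 1" "1 \<le> Q" "y \<le> -1"
  shows "exp (-2) / (9 * sqrt 2) * Q powr (-1/4 - p/2) *
      ((-y) powr (-1) * exp (y + Ffun Q y (t0 Q y)) / Gamma (Q + 1))
    \<le> tricomiT (-Q - p) (1 - p) y"
proof -
  define s T where "s = -y" and "T = t0 Q y"
  define h FT where "h = sqrt (T / s)" and "FT = Ffun Q y T"
  define L where "L = exp (FT - 2) * (1 + T + h) powr (-1 - p)"
  define N where "N = (\<integral>\<^sup>+t. ennreal (tricomi_integrand p Q y t) \<partial>lborel)"
  have s: "1 \<le> s" "y = -s" using assms by (simp_all add: s_def)
  have "0 \<le> h"
    using t0_critical(1)[of s Q] s assms by (simp add: h_def T_def)
  have "ennreal (L * h) \<le> N" "N \<le> ennreal (exp FT / p)"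
    using nn_integral_Ffun_ge[of p Q y] nn_integral_Ffun_le[of p Q y] assms
    by (simp_all add: N_def L_def FT_def T_def h_def s_def)
  then have "L * h \<le> enn2real N"
    using \<open>0 \<le> h\<close> by (intro enn2real_geI) (auto simp: L_def)
  moreover have "Q powr (1/4) / (sqrt 2 * s) \<le> h" "Q powr (-1/2 - p/2) / 9 \<le> (1 + T + h) powr (-1 - p)"
    using t0_window_length[of s Q] t0_window_weight[of s Q p] s assms by (simp_all add: T_def h_def)
  then have "exp (FT - 2) * (Q powr (-1/2 - p/2) / 9) * (Q powr (1/4) / (sqrt 2 * s)) \<le> L * h"
    unfolding L_def using s by (intro mult_mono mult_left_mono) auto
  moreover have "exp (-2) / (9 * sqrt 2) * Q powr (-1/4 - p/2) * (s powr (-1) * exp FT)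
      \<le> exp (FT - 2) * (Q powr (-1/2 - p/2) / 9) * (Q powr (1/4) / (sqrt 2 * s))"
    using s by (simp add: exp_diff exp_minus powr_minus field_simps flip: powr_add)
  ultimately have "exp (-2) / (9 * sqrt 2) * Q powr (-1/4 - p/2) * (s powr (-1) * exp FT) \<le> enn2real N"
    by linarith
  then have "exp y / Gamma (Q + 1) * (exp (-2) / (9 * sqrt 2) * Q powr (-1/4 - p/2) * (s powr (-1) * exp FT))
      \<le> tricomiT (-Q - p) (1 - p) y"
    using assms unfolding tricomiT_eq_Ffun_integral N_def by (intro mult_left_mono) auto
  then show ?thesis
    by (simp add: s_def FT_def T_def exp_add mult_ac)
qed

section \<open>Bounds for the Kummer function\<close>

lemma exp_Gfun_sqrt:
  fixes x s Q r :: real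
  assumes "0 < x" "0 < s"
  shows "x powr Q / exp x * ((s * x) powr (-r/2) * exp (2 * sqrt (s * x)))
    = s powr (-r/2) * (exp (Gfun (1 - r) Q (-s) (sqrt x)) / sqrt x)"
proof -
  have "exp (Gfun (1 - r) Q (-s) (sqrt x)) / sqrt x = exp (Gfun (1 - r) Q (-s) (sqrt x) - ln (sqrt x))"
    using assms by (simp add: exp_diff)
  also have "Gfun (1 - r) Q (-s) (sqrt x) - ln (sqrt x) = (Q - r/2) * ln x + (-x + 2 * sqrt (s * x))"
    using assms by (simp add: Gfun_def ln_sqrt real_sqrt_mult algebra_simps)
  also have "exp \<dots> = x powr (Q + -r/2) * exp (-x + 2 * sqrt (s * x))"
    using assms by (simp add: exp_add powr_def)
  finally have G: "exp (Gfun (1 - r) Q (-s) (sqrt x)) / sqrt x = x powr (Q + -r/2) * exp (-x + 2 * sqrt (s * x))" .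
  have "x powr Q / exp x * ((s * x) powr e * exp (2 * sqrt (s * x)))
      = s powr e * (x powr (Q + e) * exp (-x + 2 * sqrt (s * x)))" for e
    using assms by (simp add: powr_mult powr_add exp_diff field_simps)
  then show ?thesis
    unfolding G .
qed

lemma powr_exp_hyp0F1_le:
  fixes r Q s x :: real
  assumes "0 \<le> r" "r \<le> 1" "0 \<le> Q" "0 < s" "0 < x"
  defines "U \<equiv> u0 (1 - r) Q (-s)"
  shows "x powr Q / exp x * hyp0F1 (1/2 + r) (s * x)
    \<le> s powr (-r/2) * exp (Gfun (1 - r) Q (-s) U) * (1 / (sqrt x * (1 + (sqrt x - U)^2)))"
proof -
  have U: "sqrt s \<le> U" "2 * U^2 - 2 * sqrt s * U = 2 * Q + (1 - r)"
    using u0_critical[of s Q "1 - r"] assms by (simp_all add: U_def)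
  moreover have "0 < U"
    using U(1) assms by (smt (verit) real_sqrt_gt_zero)
  ultimately have "exp (Gfun (1 - r) Q (-s) (sqrt x)) \<le> exp (Gfun (1 - r) Q (-s) U - (sqrt x - U)^2)"
    using Gfun_le_critical[of U "sqrt x" s Q "1 - r"] assms by simp
  also have "\<dots> = exp (Gfun (1 - r) Q (-s) U) / exp ((sqrt x - U)^2)"
    by (simp add: exp_diff)
  also have "\<dots> \<le> exp (Gfun (1 - r) Q (-s) U) / (1 + (sqrt x - U)^2)"
    by (intro divide_left_mono exp_ge_add_one_self) (auto intro!: mult_pos_pos add_pos_nonneg)
  finally have G: "exp (Gfun (1 - r) Q (-s) (sqrt x)) \<le> exp (Gfun (1 - r) Q (-s) U) / (1 + (sqrt x - U)^2)" .
  have "x powr Q / exp x * hyp0F1 (1/2 + r) (s * x)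
      \<le> x powr Q / exp x * ((s * x) powr (-r/2) * exp (2 * sqrt (s * x)))"
    using hyp0F1_le[of "s * x" r] assms by (intro mult_left_mono) auto
  also have "\<dots> = s powr (-r/2) * (exp (Gfun (1 - r) Q (-s) (sqrt x)) / sqrt x)"
    by (rule exp_Gfun_sqrt[OF assms(5,4)])
  also have "\<dots> \<le> s powr (-r/2) * (exp (Gfun (1 - r) Q (-s) U) / (1 + (sqrt x - U)^2) / sqrt x)"
    using G assms by (intro mult_left_mono divide_right_mono) auto
  finally show ?thesis
    by (simp add: field_simps)
qed

lemma powr_exp_hyp0F1_ge:
  fixes r Q s x :: real
  assumes "0 \<le> r" "r \<le> 1/2" "0 \<le> Q" "1 \<le> s"
  defines "U \<equiv> u0 (1 - r) Q (-s)"
  assumes "U^2 \<le> x" "x \<le> (U + 1)^2"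
  shows "1/12 * s powr (-r/2) * exp (Gfun (1 - r) Q (-s) U - 3) / (U + 1)
    \<le> x powr Q / exp x * hyp0F1 (1/2 + r) (s * x)"
proof -
  have U: "sqrt s \<le> U" "2 * U^2 - 2 * sqrt s * U = 2 * Q + (1 - r)"
    using u0_critical[of s Q "1 - r"] assms by (simp_all add: U_def)
  have U1: "1 \<le> U" using U(1) assms by (smt (verit) real_sqrt_ge_one)
  have root: "U \<le> sqrt x" "sqrt x \<le> U + 1"
    using real_sqrt_le_mono[OF assms(6)] real_sqrt_le_mono[OF assms(7)] U1 by auto
  have "1 \<le> sqrt x" using root U1 by linarith
  then have x: "0 < x" by simp
  have "(sqrt s)^2 \<le> U^2"
    using U(1) assms by (intro power_mono) auto
  then have "1 \<le> x"
    using assms by simp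
  then have sx: "1 * 1 \<le> s * x"
    using assms by (intro mult_mono) auto
  have "exp (Gfun (1 - r) Q (-s) U - 3) \<le> exp (Gfun (1 - r) Q (-s) (sqrt x))"
    using Gfun_ge_critical[of s U "sqrt x" Q "1 - r"] U U1 root assms by simp
  then have "exp (Gfun (1 - r) Q (-s) U - 3) / (U + 1) \<le> exp (Gfun (1 - r) Q (-s) (sqrt x)) / sqrt x"
    using root U1 x by (intro frac_le) auto
  then have "1/12 * (s powr (-r/2) * (exp (Gfun (1 - r) Q (-s) U - 3) / (U + 1)))
      \<le> 1/12 * (s powr (-r/2) * (exp (Gfun (1 - r) Q (-s) (sqrt x)) / sqrt x))"
    by (intro mult_left_mono) auto
  then have "1/12 * s powr (-r/2) * exp (Gfun (1 - r) Q (-s) U - 3) / (U + 1)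
      \<le> 1/12 * (s powr (-r/2) * (exp (Gfun (1 - r) Q (-s) (sqrt x)) / sqrt x))"
    by simp
  also have "\<dots> = 1/12 * (x powr Q / exp x * ((s * x) powr (-r/2) * exp (2 * sqrt (s * x))))"
    using exp_Gfun_sqrt[of x s Q r] x assms by simp
  also have "\<dots> = x powr Q / exp x * (1/12 * ((s * x) powr (-r/2) * exp (2 * sqrt (s * x))))"
    by simp
  also have "\<dots> \<le> x powr Q / exp x * hyp0F1 (1/2 + r) (s * x)"
    using hyp0F1_ge[of "s * x" r] sx assms by (intro mult_left_mono) auto
  finally show ?thesis .
qed

lemma nn_integral_kummer_le:
  fixes r Q s :: real
  assumes "0 \<le> r" "r \<le> 1" "0 \<le> Q" "0 < s"
  defines "U \<equiv> u0 (1 - r) Q (-s)"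
  shows "(\<integral>\<^sup>+x. ennreal (kummer_integrand (1/2 + r) Q s x) \<partial>lborel)
    \<le> ennreal (2 * pi * (s powr (-r/2) * exp (Gfun (1 - r) Q (-s) U)))"
proof -
  define K where "K = s powr (-r/2) * exp (Gfun (1 - r) Q (-s) U)"
  have K: "0 < K" using assms by (simp add: K_def)
  have "(\<integral>\<^sup>+x. ennreal (kummer_integrand (1/2 + r) Q s x) \<partial>lborel)
      \<le> (\<integral>\<^sup>+x. ennreal K * ennreal (indicator {0<..} x * (1 / (sqrt x * (1 + (sqrt x - U)^2)))) \<partial>lborel)"
  proof (intro nn_integral_mono)
    fix x :: real
    have "kummer_integrand (1/2 + r) Q s x
        \<le> K * (indicator {0<..} x * (1 / (sqrt x * (1 + (sqrt x - U)^2))))"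
      using powr_exp_hyp0F1_le[of r Q s x] assms by (cases "0 < x") (auto simp: K_def U_def indicator_def)
    also have "\<dots> = K * indicator {0<..} x * (1 / (sqrt x * (1 + (sqrt x - U)^2)))"
      by simp
    finally show "ennreal (kummer_integrand (1/2 + r) Q s x)
        \<le> ennreal K * ennreal (indicator {0<..} x * (1 / (sqrt x * (1 + (sqrt x - U)^2))))"
      using K by (auto simp: ennreal_mult'[symmetric] indicator_def intro!: ennreal_leI)
  qed
  also have "\<dots> = ennreal K * (\<integral>\<^sup>+x. ennreal (indicator {0<..} x * (1 / (sqrt x * (1 + (sqrt x - U)^2)))) \<partial>lborel)"
    by (rule nn_integral_cmult) measurable
  also have "\<dots> = ennreal K * ennreal (pi + 2 * arctan U)"
    by (simp only: nn_integral_arctan_kernel)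
  also have "\<dots> \<le> ennreal K * ennreal (2 * pi)"
    using arctan_ubound[of U] by (intro mult_left_mono ennreal_leI) auto
  also have "\<dots> = ennreal (2 * pi * K)"
    using K by (simp add: ennreal_mult'[symmetric] mult.commute)
  finally show ?thesis
    by (simp add: K_def)
qed

lemma kummerM_le:
  fixes r Q y :: real
  assumes "0 \<le> r" "r \<le> 1" "0 \<le> Q" "y < 0"
  shows "kummerM (1/2 + r - (Q + 1)) (1/2 + r) y
    \<le> 2 * pi * ((-y) powr (-r/2) * exp (y + Gfun (1 - r) Q y (u0 (1 - r) Q y)) / Gamma (Q + 1))"
proof -
  define s where "s = -y"
  define N where "N = (\<integral>\<^sup>+x. ennreal (kummer_integrand (1/2 + r) Q s x) \<partial>lborel)"
  define K where "K = s powr (-r/2) * exp (Gfun (1 - r) Q (-s) (u0 (1 - r) Q (-s)))"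
  have s: "0 < s" "y = -s" using assms by (simp_all add: s_def)
  have N: "N \<le> ennreal (2 * pi * K)"
    using nn_integral_kummer_le[of r Q s] assms s by (simp add: N_def K_def)
  then have "N < top"
    by (rule le_less_trans) simp
  then have "kummerM (1/2 + r - (Q + 1)) (1/2 + r) y = exp y / Gamma (Q + 1) * enn2real N"
    using kummerM_eq_nn_integral[of "1/2 + r" s Q] assms s by (simp add: N_def)
  also have "\<dots> \<le> exp y / Gamma (Q + 1) * (2 * pi * K)"
    using N assms s by (intro mult_left_mono enn2real_leI) (auto simp: K_def)
  also have "\<dots> = 2 * pi * ((-y) powr (-r/2) * exp (y + Gfun (1 - r) Q y (u0 (1 - r) Q y)) / Gamma (Q + 1))"
    unfolding K_def s_def by (simp add: exp_add)
  finally show ?thesis .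
qed

lemma nn_integral_kummer_ge:
  fixes r Q s :: real
  assumes "0 \<le> r" "r \<le> 1/2" "0 \<le> Q" "1 \<le> s"
  defines "U \<equiv> u0 (1 - r) Q (-s)"
  shows "ennreal (exp (-3) / 12 * (s powr (-r/2) * exp (Gfun (1 - r) Q (-s) U)))
    \<le> (\<integral>\<^sup>+x. ennreal (kummer_integrand (1/2 + r) Q s x) \<partial>lborel)"
proof -
  define A where "A = 1/12 * s powr (-r/2) * exp (Gfun (1 - r) Q (-s) U - 3)"
  define L where "L = A / (U + 1)"
  have "sqrt s \<le> U" "1 \<le> sqrt s"
    using u0_critical[of s Q "1 - r"] assms by (simp_all add: U_def)
  then have U: "1 \<le> U" "0 < U + 1"
    by linarith+
  have window: "ennreal (L * ((U + 1)^2 - U^2))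
    \<le> (\<integral>\<^sup>+x. ennreal (kummer_integrand (1/2 + r) Q s x) \<partial>lborel)"
  proof (rule nn_integral_ge_interval)
    fix x assume x: "x \<in> {U^2..(U + 1)^2}"
    moreover from x have "0 \<le> x"
      using zero_le_power2[of U] by (meson atLeastAtMost_iff order_trans)
    then have "indicator {0..} x = (1::real)"
      by simp
    ultimately show "L \<le> kummer_integrand (1/2 + r) Q s x"
      using powr_exp_hyp0F1_ge[of r Q s x] assms by (simp add: L_def A_def U_def)
  next
    show "U^2 \<le> (U + 1)^2"
      using U by (intro power_mono) auto
    show "0 \<le> L"
      using U by (simp add: L_def A_def)
  qed
  have "exp (-3) / 12 * (s powr (-r/2) * exp (Gfun (1 - r) Q (-s) U)) = A"
    unfolding A_def by (simp add: exp_diff exp_minus field_simps)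
  also have "\<dots> = L * (U + 1)"
    using U(2) by (simp add: L_def)
  also have "\<dots> \<le> L * ((U + 1)^2 - U^2)"
    using U by (intro mult_left_mono) (auto simp: L_def A_def power2_eq_square algebra_simps)
  finally show ?thesis
    using window by (rule order_trans[OF ennreal_leI])
qed

lemma kummerM_ge:
  fixes r Q y :: real
  assumes "0 \<le> r" "r \<le> 1/2" "0 \<le> Q" "y \<le> -1"
  shows "exp (-3) / 12 * ((-y) powr (-r/2) * exp (y + Gfun (1 - r) Q y (u0 (1 - r) Q y)) / Gamma (Q + 1))
    \<le> kummerM (1/2 + r - (Q + 1)) (1/2 + r) y"
proof -
  define s where "s = -y"
  define N where "N = (\<integral>\<^sup>+x. ennreal (kummer_integrand (1/2 + r) Q s x) \<partial>lborel)"
  define K where "K = s powr (-r/2) * exp (Gfun (1 - r) Q (-s) (u0 (1 - r) Q (-s)))"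
  have s: "1 \<le> s" "y = -s" using assms by (simp_all add: s_def)
  have lower: "ennreal (exp (-3) / 12 * K) \<le> N" and upper: "N \<le> ennreal (2 * pi * K)"
    using nn_integral_kummer_ge[of r Q s] nn_integral_kummer_le[of r Q s] assms s
    by (simp_all add: N_def K_def)
  have "N < top"
    using upper by (rule le_less_trans) simp
  have "exp (-3) / 12 * K \<le> enn2real N"
    by (rule enn2real_geI[OF lower upper]) (simp add: K_def)
  have "exp (-3) / 12 * ((-y) powr (-r/2) * exp (y + Gfun (1 - r) Q y (u0 (1 - r) Q y)) / Gamma (Q + 1))
      = exp y / Gamma (Q + 1) * (exp (-3) / 12 * K)"
    unfolding K_def s_def by (simp add: exp_add mult_ac)
  also have "\<dots> \<le> exp y / Gamma (Q + 1) * enn2real N"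
    using \<open>exp (-3) / 12 * K \<le> enn2real N\<close> assms by (intro mult_left_mono) auto
  also have "\<dots> = kummerM (1/2 + r - (Q + 1)) (1/2 + r) y"
    using kummerM_eq_nn_integral[of "1/2 + r" s Q] \<open>N < top\<close> assms s by (simp add: N_def)
  finally show ?thesis .
qed

lemma tricomiT_two_sided:
  fixes n :: nat and \<beta> y :: real
  defines "Q \<equiv> 1 - 1 / real n - \<beta> - 1" and "C \<equiv> 12 * real n * exp 3"
  assumes n: "2 \<le> n" and Q: "1 \<le> Q" and y: "y \<le> -1"
  shows "1 / C * Q powr (- 1/4 - 1 / (2 * real n)) *
      ((- y) powr (-1) * exp (y + Ffun Q y (t0 Q y)) / Gamma (Q + 1)) \<le> tricomiT \<beta> (1 - 1 / real n) y"
    and "tricomiT \<beta> (1 - 1 / real n) y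
      \<le> C * Q powr (1/4) * (exp (y + Ffun Q y (t0 Q y)) / Gamma (Q + 1))"
proof -
  define p where "p = 1 / real n"
  have p: "0 < p" "p \<le> 1" "-Q - p = \<beta>" "1 - p = 1 - 1 / real n" "-1/4 - p/2 = - 1/4 - 1 / (2 * real n)"
    using n by (simp_all add: p_def Q_def)
  have Gamma: "0 < Gamma (Q + 1)"
    using Q by (intro Gamma_real_pos) simp
  have "exp 2 * (9 * sqrt 2) \<le> exp 2 * 18"
    using real_sqrt_le_mono[of 2 4] by simp
  also have "\<dots> \<le> exp 2 * (1 * (12 * real n))"
    using n by simp
  also have "\<dots> \<le> exp 2 * (exp 1 * (12 * real n))"
    by (intro mult_left_mono mult_right_mono) auto
  also have "\<dots> = C"
    unfolding C_def using exp_add[of "2::real" 1] by (simp add: mult_ac)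
  finally have "1 / C \<le> exp (-2) / (9 * sqrt 2)"
    using n by (simp add: C_def exp_minus field_simps)
  then have "1 / C * Q powr (- 1/4 - 1 / (2 * real n)) *
        ((- y) powr (-1) * exp (y + Ffun Q y (t0 Q y)) / Gamma (Q + 1))
      \<le> exp (-2) / (9 * sqrt 2) * Q powr (- 1/4 - 1 / (2 * real n)) *
        ((- y) powr (-1) * exp (y + Ffun Q y (t0 Q y)) / Gamma (Q + 1))"
    using Gamma by (intro mult_right_mono) auto
  also have "\<dots> \<le> tricomiT \<beta> (1 - 1 / real n) y"
    using tricomiT_ge[of p Q y, unfolded p(3-5)] p Q y by simp
  finally show "1 / C * Q powr (- 1/4 - 1 / (2 * real n)) *
      ((- y) powr (-1) * exp (y + Ffun Q y (t0 Q y)) / Gamma (Q + 1)) \<le> tricomiT \<beta> (1 - 1 / real n) y" .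
  have "tricomiT \<beta> (1 - 1 / real n) y \<le> real n * (exp (y + Ffun Q y (t0 Q y)) / Gamma (Q + 1))"
    using tricomiT_le[of p Q y, unfolded p(3,4)] p Q y by (simp add: p_def mult.commute)
  also have "\<dots> \<le> C * Q powr (1/4) * (exp (y + Ffun Q y (t0 Q y)) / Gamma (Q + 1))"
  proof (intro mult_right_mono)
    have "1 \<le> 12 * exp (3::real)"
      using exp_ge_add_one_self[of 3] by linarith
    then have "real n * 1 \<le> real n * (12 * exp 3)"
      by (intro mult_left_mono) auto
    then have "real n * 1 \<le> C * Q powr (1/4)"
      using Q by (intro mult_mono) (auto simp: C_def ge_one_powr_ge_zero mult_ac)
    then show "real n \<le> C * Q powr (1/4)" by simp
  qed (use Gamma in simp)
  finally show "tricomiT \<beta> (1 - 1 / real n) y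
      \<le> C * Q powr (1/4) * (exp (y + Ffun Q y (t0 Q y)) / Gamma (Q + 1))" .
qed

lemma kummerM_two_sided:
  fixes n :: nat and \<beta> y :: real
  defines "Q \<equiv> 1 - 1 / real n - \<beta> - 1" and "C \<equiv> 12 * real n * exp 3"
  defines "E \<equiv> (- y) powr ((1 - 2 * (1 - 1 / real n)) / 4) *
      exp (y + Gfun (1/2 + 1 / real n) Q y (u0 (1/2 + 1 / real n) Q y)) / Gamma (Q + 1)"
  assumes n: "2 \<le> n" and Q: "1 \<le> Q" and y: "y \<le> -1"
  shows "1 / C * Q powr (- 1/4) * E \<le> kummerM \<beta> (1 - 1 / real n) y"
    and "kummerM \<beta> (1 - 1 / real n) y \<le> C * E"
proof -
  define r where "r = 1/2 - 1 / real n"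
  have "2 \<le> real n" using n by simp
  then have r: "0 \<le> r" "r \<le> 1/2" "1/2 + r - (Q + 1) = \<beta>" "1/2 + r = 1 - 1 / real n"
    "1 - r = 1/2 + 1 / real n" "-r/2 = (1 - 2 * (1 - 1 / real n)) / 4"
    by (simp_all add: r_def Q_def field_simps)
  have E: "0 \<le> E"
    using Q by (simp add: E_def Gamma_real_pos less_imp_le)
  have "Q powr (- 1/4) \<le> 1"
    using Q by (simp add: powr_minus_divide ge_one_powr_ge_zero)
  moreover have "12 * exp 3 * 1 \<le> 12 * exp 3 * real n"
    using n by (intro mult_left_mono) auto
  then have "1 / C \<le> exp (-3) / 12"
    by (simp add: C_def exp_minus field_simps mult_ac)
  ultimately have "1 / C * Q powr (- 1/4) * E \<le> exp (-3) / 12 * 1 * E"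
    using E n by (intro mult_right_mono mult_mono) (auto simp: C_def)
  also have "\<dots> \<le> kummerM \<beta> (1 - 1 / real n) y"
    using kummerM_ge[of r Q y, unfolded r(3-6)] r Q y by (simp add: E_def)
  finally show "1 / C * Q powr (- 1/4) * E \<le> kummerM \<beta> (1 - 1 / real n) y" .
  have "kummerM \<beta> (1 - 1 / real n) y \<le> 2 * pi * E"
    using kummerM_le[of r Q y, unfolded r(3-6)] r Q y by (simp add: E_def)
  also have "\<dots> \<le> C * E"
  proof (intro mult_right_mono)
    have "2 * pi \<le> 12 * 1 * 1"
      using pi_less_4 by simp
    also have "\<dots> \<le> 12 * real n * exp 3"
      using n by (intro mult_mono) auto
    finally show "2 * pi \<le> C" by (simp add: C_def)
  qed (rule E)
  finally show "kummerM \<beta> (1 - 1 / real n) y \<le> C * E" .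
qed

theorem proposition4p4:
  fixes n :: nat
  assumes "n \<ge> 2"
  shows "\<exists>C>0. \<forall>\<beta> y::real.
    let \<alpha> = 1 - 1 / real n; \<gamma> = 1/2 + 1 / real n; Q = \<alpha> - \<beta> - 1 in
    \<beta> \<le> 0 \<longrightarrow> Q \<ge> 1 \<longrightarrow> y \<le> -1 \<longrightarrow>
      (1 / C) * Q powr (- 1/4 - 1 / (2 * real n)) *
         ((- y) powr (-1) * exp (y + Ffun Q y (t0 Q y)) / Gamma (Q + 1))
        \<le> tricomiT \<beta> \<alpha> y
    \<and> tricomiT \<beta> \<alpha> y \<le> C * Q powr (1/4) * (exp (y + Ffun Q y (t0 Q y)) / Gamma (Q + 1))
    \<and> (1 / C) * Q powr (- 1/4) *
         ((- y) powr ((1 - 2 * \<alpha>) / 4) * exp (y + Gfun \<gamma> Q y (u0 \<gamma> Q y)) / Gamma (Q + 1))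
        \<le> kummerM \<beta> \<alpha> y
    \<and> kummerM \<beta> \<alpha> y \<le>
         C * ((- y) powr ((1 - 2 * \<alpha>) / 4) * exp (y + Gfun \<gamma> Q y (u0 \<gamma> Q y)) / Gamma (Q + 1))"
proof -
  have "0 < 12 * real n * exp 3"
    using assms by simp
  then show ?thesis
    unfolding Let_def using tricomiT_two_sided[OF assms] kummerM_two_sided[OF assms] by blast
qed

end
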